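(* Let $S$ and $T$ be monoids. Then the direct product $S\times T$ is weakly right coherent if and only if both $S$ and $T$ are weakly right coherent.
   Context: A monoid $M$ is weakly right coherent (WRC) if every finitely generated right ideal of $M$ is finitely presented as a right $M$-act. (It is known that a monoid is WRC if and only if it is both right ideal Howson and finitely right equated.) A semigroup $S$ is right ideal Howson (RIH) if the intersection of any two finitely generated right ideals of $S$ is finitely generated (a right ideal $I$ is finitely generated if $I=XS^1$ for some finite $X\subseteq I$, where $S^1$ is $S$ with an identity adjoined if $S$ has none, and $S^1=S$ otherwise). For $a\in S$, the right annihilator congruence is $\mathbf{r}_S(a)=\{(s,t)\in S\times S\mid as=at\}$; $S$ is finitely right equated (FRE) if $\mathbf{r}_S(a)$ is finitely generated as a right congruence for every $a\in S$. *)

theory Defs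
  imports "HOL-Algebra.Group"
begin

definition right_act :: "'a monoid \<Rightarrow> 'x set \<Rightarrow> ('x \<Rightarrow> 'a \<Rightarrow> 'x) \<Rightarrow> bool" where
  "right_act M A act \<longleftrightarrow>
     (\<forall>x\<in>A. \<forall>s\<in>carrier M. act x s \<in> A) \<and>
     (\<forall>x\<in>A. act x \<one>\<^bsub>M\<^esub> = x) \<and>
     (\<forall>x\<in>A. \<forall>s\<in>carrier M. \<forall>t\<in>carrier M. act (act x s) t = act x (s \<otimes>\<^bsub>M\<^esub> t))"

definition right_congruence :: "'a monoid \<Rightarrow> 'x set \<Rightarrow> ('x \<Rightarrow> 'a \<Rightarrow> 'x) \<Rightarrow> ('x \<times> 'x) set \<Rightarrow> bool" where
  "right_congruence M A act \<rho> \<longleftrightarrow>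
     equiv A \<rho> \<and> (\<forall>(x, y)\<in>\<rho>. \<forall>s\<in>carrier M. (act x s, act y s) \<in> \<rho>)"

definition gen_right_congruence :: "'a monoid \<Rightarrow> 'x set \<Rightarrow> ('x \<Rightarrow> 'a \<Rightarrow> 'x) \<Rightarrow> ('x \<times> 'x) set \<Rightarrow> ('x \<times> 'x) set" where
  "gen_right_congruence M A act H = \<Inter>{\<rho>. right_congruence M A act \<rho> \<and> H \<subseteq> \<rho>}"

definition fg_right_congruence :: "'a monoid \<Rightarrow> 'x set \<Rightarrow> ('x \<Rightarrow> 'a \<Rightarrow> 'x) \<Rightarrow> ('x \<times> 'x) set \<Rightarrow> bool" where
  "fg_right_congruence M A act \<rho> \<longleftrightarrow>
     right_congruence M A act \<rho> \<and>
     (\<exists>H. finite H \<and> H \<subseteq> A \<times> A \<and> \<rho> = gen_right_congruence M A act H)"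

definition free_act_carrier :: "'a monoid \<Rightarrow> nat \<Rightarrow> (nat \<times> 'a) set" where
  "free_act_carrier M n = {..<n} \<times> carrier M"

definition free_action :: "'a monoid \<Rightarrow> nat \<times> 'a \<Rightarrow> 'a \<Rightarrow> nat \<times> 'a" where
  "free_action M p t = (fst p, snd p \<otimes>\<^bsub>M\<^esub> t)"

definition act_hom :: "'a monoid \<Rightarrow> 'x set \<Rightarrow> ('x \<Rightarrow> 'a \<Rightarrow> 'x) \<Rightarrow> 'y set \<Rightarrow> ('y \<Rightarrow> 'a \<Rightarrow> 'y) \<Rightarrow> ('x \<Rightarrow> 'y) \<Rightarrow> bool" where
  "act_hom M A act B act' f \<longleftrightarrow>
     f \<in> A \<rightarrow> B \<and> (\<forall>x\<in>A. \<forall>s\<in>carrier M. f (act x s) = act' (f x) s)"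

text \<open>A right M-act is finitely presented if it is isomorphic to F/rho with F a finitely
  generated free right act and rho a finitely generated right congruence on F; equivalently
  (first isomorphism theorem) it is the image of a surjective act morphism from a finitely
  generated free act whose kernel is a finitely generated right congruence.\<close>
definition finitely_presented_act :: "'a monoid \<Rightarrow> 'x set \<Rightarrow> ('x \<Rightarrow> 'a \<Rightarrow> 'x) \<Rightarrow> bool" where
  "finitely_presented_act M A act \<longleftrightarrow>
     right_act M A act \<and>
     (\<exists>n f. act_hom M (free_act_carrier M n) (free_action M) A act f \<and>
            f ` free_act_carrier M n = A \<and>
            fg_right_congruence M (free_act_carrier M n) (free_action M)
              {(x, y). x \<in> free_act_carrier M n \<and> y \<in> free_act_carrier M n \<and> f x = f y})"

definition fg_right_ideal :: "'a monoid \<Rightarrow> 'a set \<Rightarrow> bool" where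
  "fg_right_ideal M I \<longleftrightarrow>
     (\<exists>X. finite X \<and> X \<subseteq> carrier M \<and> I = {x \<otimes>\<^bsub>M\<^esub> s | x s. x \<in> X \<and> s \<in> carrier M})"

definition weakly_right_coherent :: "'a monoid \<Rightarrow> bool" where
  "weakly_right_coherent M \<longleftrightarrow>
     (\<forall>I. fg_right_ideal M I \<longrightarrow> finitely_presented_act M I (\<lambda>x s. x \<otimes>\<^bsub>M\<^esub> s))"

end

theory Submission
  imports Defs
begin

text \<open>A monoid is weakly right coherent iff it is right ideal Howson and finitely right equated.
  For the nontrivial direction, the right ideal \<open>x\<^sub>0M \<union> \<dots> \<union> x\<^bsub>n-1\<^esub>M\<close> is presented by the free
  act on \<open>n\<close> generators, and the kernel of this presentation is generated by the annihilator
  relations of each \<open>x\<^sub>i\<close> inside its own component together with finitely many relations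
  \<open>x\<^sub>i u = x\<^sub>j v\<close> generating \<open>x\<^sub>iM \<inter> x\<^sub>jM\<close>; by a Schanuel-type argument the choice of
  presentation is irrelevant.

  Both properties pass from \<open>S \<times> T\<close> to its retracts \<open>S\<close> and \<open>T\<close> (via \<open>s \<mapsto> (s, 1)\<close> and the
  projection), and from \<open>S\<close> and \<open>T\<close> to \<open>S \<times> T\<close>: intersections of principal right ideals of
  \<open>S \<times> T\<close> are products, and the right annihilator of \<open>(a, b)\<close> is generated by the relations of
  \<open>a\<close> in the first coordinate together with those of \<open>b\<close> in the second.\<close>

section \<open>Right congruences\<close>

lemma right_congruence_refl: "right_congruence M A act \<rho> \<Longrightarrow> x \<in> A \<Longrightarrow> (x, x) \<in> \<rho>"
  unfolding right_congruence_def equiv_def refl_on_def by blast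

lemma right_congruence_sym: "right_congruence M A act \<rho> \<Longrightarrow> (x, y) \<in> \<rho> \<Longrightarrow> (y, x) \<in> \<rho>"
  unfolding right_congruence_def equiv_def sym_def by blast

lemma right_congruence_trans:
  "right_congruence M A act \<rho> \<Longrightarrow> (x, y) \<in> \<rho> \<Longrightarrow> (y, z) \<in> \<rho> \<Longrightarrow> (x, z) \<in> \<rho>"
  unfolding right_congruence_def equiv_def trans_def by blast

lemma right_congruence_compat:
  "right_congruence M A act \<rho> \<Longrightarrow> (x, y) \<in> \<rho> \<Longrightarrow> s \<in> carrier M \<Longrightarrow> (act x s, act y s) \<in> \<rho>"
  unfolding right_congruence_def by blast

lemma right_congruence_subset: "right_congruence M A act \<rho> \<Longrightarrow> \<rho> \<subseteq> A \<times> A"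
  unfolding right_congruence_def equiv_def refl_on_def by blast

lemma right_congruenceI:
  assumes "\<rho> \<subseteq> A \<times> A" "\<And>x. x \<in> A \<Longrightarrow> (x, x) \<in> \<rho>" "\<And>x y. (x, y) \<in> \<rho> \<Longrightarrow> (y, x) \<in> \<rho>"
    "\<And>x y z. (x, y) \<in> \<rho> \<Longrightarrow> (y, z) \<in> \<rho> \<Longrightarrow> (x, z) \<in> \<rho>"
    "\<And>x y s. (x, y) \<in> \<rho> \<Longrightarrow> s \<in> carrier M \<Longrightarrow> (act x s, act y s) \<in> \<rho>"
  shows "right_congruence M A act \<rho>"
  using assms unfolding right_congruence_def equiv_def refl_on_def sym_def trans_def by blast

lemma gen_right_congruence_incl: "H \<subseteq> gen_right_congruence M A act H"
  unfolding gen_right_congruence_def by blast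

lemma gen_right_congruence_least:
  "right_congruence M A act \<rho> \<Longrightarrow> H \<subseteq> \<rho> \<Longrightarrow> gen_right_congruence M A act H \<subseteq> \<rho>"
  unfolding gen_right_congruence_def by blast

lemma right_congruence_gen_right_congruence:
  assumes closed: "\<forall>x\<in>A. \<forall>s\<in>carrier M. act x s \<in> A" and H: "H \<subseteq> A \<times> A"
  shows "right_congruence M A act (gen_right_congruence M A act H)"
proof -
  have "right_congruence M A act (A \<times> A)"
    using closed by (intro right_congruenceI) auto
  then have "gen_right_congruence M A act H \<subseteq> A \<times> A"
    using H by (rule gen_right_congruence_least)
  then show ?thesis
    unfolding gen_right_congruence_def
    by (intro right_congruenceI)
      (blast dest: right_congruence_refl right_congruence_sym right_congruence_trans
        right_congruence_compat)+
qed

lemma fg_right_congruenceI: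
  assumes "right_congruence M A act \<rho>" "finite H" "H \<subseteq> \<rho>"
    and "\<rho> \<subseteq> gen_right_congruence M A act H"
  shows "fg_right_congruence M A act \<rho>"
  unfolding fg_right_congruence_def
  using assms gen_right_congruence_least[of M A act \<rho> H] right_congruence_subset[OF assms(1)]
  by blast

lemma fg_right_congruenceE:
  assumes "fg_right_congruence M A act \<rho>"
  obtains H where "finite H" "H \<subseteq> A \<times> A" "\<rho> = gen_right_congruence M A act H"
  using assms unfolding fg_right_congruence_def by blast

text \<open>The preimage of \<open>\<rho>\<close> under \<open>\<phi>\<close> is a right congruence containing \<open>H\<close>.\<close>
lemma gen_right_congruence_map:
  assumes pq: "(p, q) \<in> gen_right_congruence N A act H"
    and closed: "\<forall>x\<in>A. \<forall>s\<in>carrier N. act x s \<in> A"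
    and \<rho>: "right_congruence M B act' \<rho>"
    and \<phi>: "\<phi> \<in> A \<rightarrow> B" and h: "h \<in> carrier N \<rightarrow> carrier M"
    and equivariant: "\<And>p u. p \<in> A \<Longrightarrow> u \<in> carrier N \<Longrightarrow> \<phi> (act p u) = act' (\<phi> p) (h u)"
    and H: "H \<subseteq> A \<times> A" "\<And>p q. (p, q) \<in> H \<Longrightarrow> (\<phi> p, \<phi> q) \<in> \<rho>"
  shows "(\<phi> p, \<phi> q) \<in> \<rho>"
proof -
  define R where "R = {(p, q). p \<in> A \<and> q \<in> A \<and> (\<phi> p, \<phi> q) \<in> \<rho>}"
  have "right_congruence N A act R"
  proof (rule right_congruenceI)
    fix p q u assume "(p, q) \<in> R" "u \<in> carrier N"
    then show "(act p u, act q u) \<in> R"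
      using closed h right_congruence_compat[OF \<rho>, of "\<phi> p" "\<phi> q" "h u"]
      unfolding R_def by (auto simp: equivariant)
  next
    fix p assume "p \<in> A"
    then show "(p, p) \<in> R"
      using \<phi> right_congruence_refl[OF \<rho>] unfolding R_def by auto
  qed (auto simp: R_def intro: right_congruence_sym[OF \<rho>] right_congruence_trans[OF \<rho>])
  moreover have "H \<subseteq> R"
    using H unfolding R_def by auto
  ultimately show ?thesis
    using gen_right_congruence_least pq unfolding R_def by blast
qed

lemma right_congruence_closed:
  assumes \<rho>: "right_congruence M A act \<rho>"
  shows "\<forall>x\<in>A. \<forall>s\<in>carrier M. act x s \<in> A"
proof (intro ballI)
  fix x s assume "x \<in> A" "s \<in> carrier M"
  then have "(act x s, act x s) \<in> \<rho>"
    by (intro right_congruence_compat[OF \<rho>] right_congruence_refl[OF \<rho>])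
  then show "act x s \<in> A"
    using right_congruence_subset[OF \<rho>] by blast
qed

text \<open>The \<open>\<phi>\<close>-image of generators of \<open>\<rho>\<^sub>A\<close> generates \<open>\<rho>\<^sub>B\<close>.\<close>
lemma fg_right_congruence_retract:
  assumes closed: "\<forall>x\<in>A. \<forall>s\<in>carrier N. act x s \<in> A"
    and \<rho>\<^sub>A: "fg_right_congruence N A act \<rho>\<^sub>A" and \<rho>\<^sub>B: "right_congruence M B act' \<rho>\<^sub>B"
    and \<phi>: "\<phi> \<in> A \<rightarrow> B" and h: "h \<in> carrier N \<rightarrow> carrier M"
    and equivariant: "\<And>p u. p \<in> A \<Longrightarrow> u \<in> carrier N \<Longrightarrow> \<phi> (act p u) = act' (\<phi> p) (h u)"
    and image: "\<And>p q. (p, q) \<in> \<rho>\<^sub>A \<Longrightarrow> (\<phi> p, \<phi> q) \<in> \<rho>\<^sub>B"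
    and reflect: "\<And>b b'. (b, b') \<in> \<rho>\<^sub>B \<Longrightarrow> (\<psi> b, \<psi> b') \<in> \<rho>\<^sub>A \<and> \<phi> (\<psi> b) = b \<and> \<phi> (\<psi> b') = b'"
  shows "fg_right_congruence M B act' \<rho>\<^sub>B"
proof -
  obtain H where H: "finite H" "H \<subseteq> A \<times> A" "\<rho>\<^sub>A = gen_right_congruence N A act H"
    using \<rho>\<^sub>A by (rule fg_right_congruenceE)
  have "H \<subseteq> \<rho>\<^sub>A"
    unfolding H(3) by (rule gen_right_congruence_incl)
  then have H'_\<rho>\<^sub>B: "map_prod \<phi> \<phi> ` H \<subseteq> \<rho>\<^sub>B"
    using image by auto
  let ?G = "gen_right_congruence M B act' (map_prod \<phi> \<phi> ` H)"
  have G: "right_congruence M B act' ?G"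
    using H'_\<rho>\<^sub>B right_congruence_subset[OF \<rho>\<^sub>B]
    by (intro right_congruence_gen_right_congruence right_congruence_closed[OF \<rho>\<^sub>B]) (rule subset_trans)
  have "\<rho>\<^sub>B \<subseteq> ?G"
  proof clarify
    fix b b' assume "(b, b') \<in> \<rho>\<^sub>B"
    with reflect have "(\<psi> b, \<psi> b') \<in> \<rho>\<^sub>A" "\<phi> (\<psi> b) = b" "\<phi> (\<psi> b') = b'"
      by blast+
    then have "(\<psi> b, \<psi> b') \<in> gen_right_congruence N A act H" "\<phi> (\<psi> b) = b" "\<phi> (\<psi> b') = b'"
      unfolding H(3) .
    moreover have "(\<phi> (\<psi> b), \<phi> (\<psi> b')) \<in> ?G"
    proof (rule gen_right_congruence_map[OF calculation(1) closed G])
      fix p q assume "(p, q) \<in> H"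
      then have "(\<phi> p, \<phi> q) \<in> map_prod \<phi> \<phi> ` H"
        by (rule rev_image_eqI) simp
      then show "(\<phi> p, \<phi> q) \<in> ?G"
        by (rule subsetD[OF gen_right_congruence_incl])
    qed (fact \<phi> h equivariant H(2))+
    ultimately show "(b, b') \<in> ?G"
      by simp
  qed
  then show ?thesis
    by (rule fg_right_congruenceI[OF \<rho>\<^sub>B finite_imageI[OF H(1)] H'_\<rho>\<^sub>B])
qed

section \<open>Presentations of acts\<close>

definition kernel_rel :: "'x set \<Rightarrow> ('x \<Rightarrow> 'y) \<Rightarrow> ('x \<times> 'x) set" where
  "kernel_rel A f = {(x, y). x \<in> A \<and> y \<in> A \<and> f x = f y}"

lemma right_congruence_kernel_rel:
  assumes "\<forall>x\<in>A. \<forall>s\<in>carrier M. act x s \<in> A" and "act_hom M A act B act' f"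
  shows "right_congruence M A act (kernel_rel A f)"
  using assms unfolding act_hom_def kernel_rel_def by (intro right_congruenceI) auto

lemma act_hom_closed: "act_hom M A act B act' f \<Longrightarrow> x \<in> A \<Longrightarrow> f x \<in> B"
  unfolding act_hom_def by auto

lemma act_hom_act:
  "act_hom M A act B act' f \<Longrightarrow> x \<in> A \<Longrightarrow> s \<in> carrier M \<Longrightarrow> f (act x s) = act' (f x) s"
  unfolding act_hom_def by blast

lemma free_action_closed:
  "monoid M \<Longrightarrow> \<forall>p\<in>free_act_carrier M n. \<forall>s\<in>carrier M. free_action M p s \<in> free_act_carrier M n"
  unfolding free_act_carrier_def free_action_def by (auto simp: monoid.m_closed)

lemma right_act_free_act: "monoid M \<Longrightarrow> right_act M (free_act_carrier M n) (free_action M)"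
  unfolding right_act_def free_act_carrier_def free_action_def
  by (auto simp: monoid.m_closed monoid.r_one monoid.m_assoc)

lemma free_action_generator: "monoid M \<Longrightarrow> s \<in> carrier M \<Longrightarrow> free_action M (i, \<one>\<^bsub>M\<^esub>) s = (i, s)"
  unfolding free_action_def by (simp add: monoid.l_one)

lemma generator_in_free_act_carrier: "monoid M \<Longrightarrow> i < n \<Longrightarrow> (i, \<one>\<^bsub>M\<^esub>) \<in> free_act_carrier M n"
  unfolding free_act_carrier_def by (simp add: monoid.one_closed)

definition free_hom :: "('x \<Rightarrow> 'a \<Rightarrow> 'x) \<Rightarrow> (nat \<Rightarrow> 'x) \<Rightarrow> nat \<times> 'a \<Rightarrow> 'x" where
  "free_hom act u p = act (u (fst p)) (snd p)"

lemma act_hom_free_hom: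
  assumes "right_act M B act" and "\<forall>i<n. u i \<in> B"
  shows "act_hom M (free_act_carrier M n) (free_action M) B act (free_hom act u)"
  using assms unfolding act_hom_def right_act_def free_hom_def free_act_carrier_def free_action_def
  by auto

lemma act_hom_free_eq:
  assumes M: "monoid M" and f: "act_hom M (free_act_carrier M n) (free_action M) B act f"
    and p: "p \<in> free_act_carrier M n"
  shows "f p = act (f (fst p, \<one>\<^bsub>M\<^esub>)) (snd p)"
proof -
  have "(fst p, \<one>\<^bsub>M\<^esub>) \<in> free_act_carrier M n" "snd p \<in> carrier M"
    using p generator_in_free_act_carrier[OF M] unfolding free_act_carrier_def by auto
  moreover have "free_action M (fst p, \<one>\<^bsub>M\<^esub>) (snd p) = p"
    using free_action_generator[OF M \<open>snd p \<in> carrier M\<close>] by simp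
  ultimately show ?thesis
    using f unfolding act_hom_def by metis
qed

lemma free_act_lift:
  assumes M: "monoid M"
    and g: "act_hom M (free_act_carrier M m) (free_action M) B act g" "g ` free_act_carrier M m = B"
    and f: "act_hom M (free_act_carrier M n) (free_action M) B act f"
  obtains \<alpha> where
    "act_hom M (free_act_carrier M n) (free_action M) (free_act_carrier M m) (free_action M) \<alpha>"
    "\<And>p. p \<in> free_act_carrier M n \<Longrightarrow> g (\<alpha> p) = f p"
proof -
  have "\<forall>i\<in>{..<n}. \<exists>v. v \<in> free_act_carrier M m \<and> g v = f (i, \<one>\<^bsub>M\<^esub>)"
  proof
    fix i assume "i \<in> {..<n}"
    then have "f (i, \<one>\<^bsub>M\<^esub>) \<in> B"
      using f generator_in_free_act_carrier[OF M] unfolding act_hom_def by auto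
    then show "\<exists>v. v \<in> free_act_carrier M m \<and> g v = f (i, \<one>\<^bsub>M\<^esub>)"
      using g(2) by force
  qed
  then obtain u where u: "\<forall>i\<in>{..<n}. u i \<in> free_act_carrier M m \<and> g (u i) = f (i, \<one>\<^bsub>M\<^esub>)"
    by (metis bchoice)
  have hom: "act_hom M (free_act_carrier M n) (free_action M) (free_act_carrier M m) (free_action M)
      (free_hom (free_action M) u)"
    using u by (intro act_hom_free_hom right_act_free_act M) auto
  have "g (free_hom (free_action M) u p) = f p" if p: "p \<in> free_act_carrier M n" for p
  proof -
    have "fst p < n" "snd p \<in> carrier M" using p unfolding free_act_carrier_def by auto
    then have "g (free_hom (free_action M) u p) = act (g (u (fst p))) (snd p)"
      using g(1) u unfolding act_hom_def free_hom_def by simp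
    also have "\<dots> = f p"
      using u \<open>fst p < n\<close> act_hom_free_eq[OF M f p] by simp
    finally show ?thesis .
  qed
  with hom show thesis by (rule that)
qed

lemma act_hom_id: "\<forall>x\<in>A. \<forall>s\<in>carrier M. act x s \<in> A \<Longrightarrow> act_hom M A act A act (\<lambda>x. x)"
  unfolding act_hom_def by auto

lemma act_hom_comp:
  "act_hom M A act B act' f \<Longrightarrow> act_hom M B act' C act'' g \<Longrightarrow> act_hom M A act C act'' (g \<circ> f)"
  unfolding act_hom_def by auto

lemma free_act_hom_congruent:
  assumes M: "monoid M" and \<rho>: "right_congruence M B act \<rho>"
    and f: "act_hom M (free_act_carrier M n) (free_action M) B act f"
    and g: "act_hom M (free_act_carrier M n) (free_action M) B act g"
    and generators: "\<And>i. i < n \<Longrightarrow> (f (i, \<one>\<^bsub>M\<^esub>), g (i, \<one>\<^bsub>M\<^esub>)) \<in> \<rho>"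
    and p: "p \<in> free_act_carrier M n"
  shows "(f p, g p) \<in> \<rho>"
proof -
  have "fst p < n" "snd p \<in> carrier M"
    using p unfolding free_act_carrier_def by auto
  then show ?thesis
    using right_congruence_compat[OF \<rho> generators] act_hom_free_eq[OF M f p] act_hom_free_eq[OF M g p]
    by simp
qed

text \<open>A Schanuel-type comparison of two presentations of the same act.\<close>
lemma kernel_rel_eq_gen_transfer:
  assumes M: "monoid M"
    and \<alpha>: "act_hom M (free_act_carrier M n) (free_action M) (free_act_carrier M m) (free_action M) \<alpha>"
    and \<beta>: "act_hom M (free_act_carrier M m) (free_action M) (free_act_carrier M n) (free_action M) \<beta>"
    and f: "act_hom M (free_act_carrier M n) (free_action M) B act f"
    and g\<alpha>: "\<And>p. p \<in> free_act_carrier M n \<Longrightarrow> g (\<alpha> p) = f p"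
    and f\<beta>: "\<And>p. p \<in> free_act_carrier M m \<Longrightarrow> f (\<beta> p) = g p"
    and H: "H \<subseteq> free_act_carrier M m \<times> free_act_carrier M m"
      "kernel_rel (free_act_carrier M m) g = gen_right_congruence M (free_act_carrier M m) (free_action M) H"
  defines "H' \<equiv> map_prod \<beta> \<beta> ` H \<union> (\<lambda>i. ((i, \<one>\<^bsub>M\<^esub>), \<beta> (\<alpha> (i, \<one>\<^bsub>M\<^esub>)))) ` {..<n}"
  shows "kernel_rel (free_act_carrier M n) f = gen_right_congruence M (free_act_carrier M n) (free_action M) H'"
proof -
  let ?Fm = "free_act_carrier M m" and ?Fn = "free_act_carrier M n" and ?fa = "free_action M"
  let ?G = "gen_right_congruence M ?Fn ?fa H'"
  have ker_f: "right_congruence M ?Fn ?fa (kernel_rel ?Fn f)"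
    by (rule right_congruence_kernel_rel[OF free_action_closed[OF M] f])
  have H_ker: "H \<subseteq> kernel_rel ?Fm g"
    unfolding H(2) by (rule gen_right_congruence_incl)
  have "map_prod \<beta> \<beta> ` H \<subseteq> kernel_rel ?Fn f"
    using H_ker act_hom_closed[OF \<beta>] f\<beta> unfolding kernel_rel_def by auto
  moreover have "((i, \<one>\<^bsub>M\<^esub>), \<beta> (\<alpha> (i, \<one>\<^bsub>M\<^esub>))) \<in> kernel_rel ?Fn f" if "i < n" for i
    using generator_in_free_act_carrier[OF M that] act_hom_closed[OF \<beta>] act_hom_closed[OF \<alpha>] f\<beta> g\<alpha>
    unfolding kernel_rel_def by simp
  ultimately have H'_ker: "H' \<subseteq> kernel_rel ?Fn f"
    unfolding H'_def by blast
  then have G: "right_congruence M ?Fn ?fa ?G"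
    using right_congruence_subset[OF ker_f]
    by (intro right_congruence_gen_right_congruence free_action_closed M) (rule subset_trans)
  have \<beta>\<alpha>: "(p, (\<beta> \<circ> \<alpha>) p) \<in> ?G" if "p \<in> ?Fn" for p
  proof (rule free_act_hom_congruent[OF M G act_hom_id[OF free_action_closed[OF M]] act_hom_comp[OF \<alpha> \<beta>] _ that])
    fix i assume "i < n"
    then have "((i, \<one>\<^bsub>M\<^esub>), (\<beta> \<circ> \<alpha>) (i, \<one>\<^bsub>M\<^esub>)) \<in> H'"
      unfolding H'_def by auto
    then show "((i, \<one>\<^bsub>M\<^esub>), (\<beta> \<circ> \<alpha>) (i, \<one>\<^bsub>M\<^esub>)) \<in> ?G"
      using gen_right_congruence_incl by blast
  qed
  have "kernel_rel ?Fn f \<subseteq> ?G"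
  proof clarify
    fix a b assume ab: "(a, b) \<in> kernel_rel ?Fn f"
    then have "(\<alpha> a, \<alpha> b) \<in> gen_right_congruence M ?Fm ?fa H"
      using act_hom_closed[OF \<alpha>] g\<alpha> unfolding H(2)[symmetric] kernel_rel_def by auto
    then have "(\<beta> (\<alpha> a), \<beta> (\<alpha> b)) \<in> ?G"
    proof (rule gen_right_congruence_map[OF _ free_action_closed[OF M] G, where h = "\<lambda>u. u"])
      show "\<beta> \<in> ?Fm \<rightarrow> ?Fn"
        using act_hom_closed[OF \<beta>] by blast
      show "\<And>p u. p \<in> ?Fm \<Longrightarrow> u \<in> carrier M \<Longrightarrow> \<beta> (?fa p u) = ?fa (\<beta> p) u"
        by (rule act_hom_act[OF \<beta>])
      show "\<And>p q. (p, q) \<in> H \<Longrightarrow> (\<beta> p, \<beta> q) \<in> ?G"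
        using gen_right_congruence_incl[of H'] unfolding H'_def by force
    qed (simp_all add: H(1))
    then show "(a, b) \<in> ?G"
      using ab \<beta>\<alpha> unfolding kernel_rel_def comp_def
      by (blast intro: right_congruence_trans[OF G] right_congruence_sym[OF G])
  qed
  then show ?thesis
    using gen_right_congruence_least[OF ker_f H'_ker] by blast
qed

lemma fg_kernel_rel_transfer:
  assumes M: "monoid M"
    and g: "act_hom M (free_act_carrier M m) (free_action M) B act g" "g ` free_act_carrier M m = B"
      "fg_right_congruence M (free_act_carrier M m) (free_action M) (kernel_rel (free_act_carrier M m) g)"
    and f: "act_hom M (free_act_carrier M n) (free_action M) B act f" "f ` free_act_carrier M n = B"
  shows "fg_right_congruence M (free_act_carrier M n) (free_action M) (kernel_rel (free_act_carrier M n) f)"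
proof -
  obtain \<alpha> where \<alpha>: "act_hom M (free_act_carrier M n) (free_action M) (free_act_carrier M m) (free_action M) \<alpha>"
    and g\<alpha>: "\<And>p. p \<in> free_act_carrier M n \<Longrightarrow> g (\<alpha> p) = f p"
    using free_act_lift[OF M g(1,2) f(1)] by blast
  obtain \<beta> where \<beta>: "act_hom M (free_act_carrier M m) (free_action M) (free_act_carrier M n) (free_action M) \<beta>"
    and f\<beta>: "\<And>p. p \<in> free_act_carrier M m \<Longrightarrow> f (\<beta> p) = g p"
    using free_act_lift[OF M f(1,2) g(1)] by blast
  obtain H where H: "finite H" "H \<subseteq> free_act_carrier M m \<times> free_act_carrier M m"
    "kernel_rel (free_act_carrier M m) g = gen_right_congruence M (free_act_carrier M m) (free_action M) H"
    using g(3) by (rule fg_right_congruenceE)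
  define H' where "H' = map_prod \<beta> \<beta> ` H \<union> (\<lambda>i. ((i, \<one>\<^bsub>M\<^esub>), \<beta> (\<alpha> (i, \<one>\<^bsub>M\<^esub>)))) ` {..<n}"
  have eq: "kernel_rel (free_act_carrier M n) f = gen_right_congruence M (free_act_carrier M n) (free_action M) H'"
    unfolding H'_def by (rule kernel_rel_eq_gen_transfer[OF M \<alpha> \<beta> f(1) g\<alpha> f\<beta> H(2,3)])
  show ?thesis
  proof (rule fg_right_congruenceI[OF right_congruence_kernel_rel[OF free_action_closed[OF M] f(1)]])
    show "finite H'"
      using H(1) unfolding H'_def by simp
    show "H' \<subseteq> kernel_rel (free_act_carrier M n) f"
      unfolding eq by (rule gen_right_congruence_incl)
  qed (simp add: eq)
qed

section \<open>Finitely generated right ideals\<close>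

abbreviation (input) right_mult :: "'a monoid \<Rightarrow> 'a \<Rightarrow> 'a \<Rightarrow> 'a" where
  "right_mult M \<equiv> \<lambda>x s. x \<otimes>\<^bsub>M\<^esub> s"

lemma right_act_right_mult: "monoid M \<Longrightarrow> right_act M (carrier M) (right_mult M)"
  unfolding right_act_def by (simp add: monoid.m_closed monoid.r_one monoid.m_assoc)

lemma right_mult_closed: "monoid M \<Longrightarrow> \<forall>x\<in>carrier M. \<forall>s\<in>carrier M. x \<otimes>\<^bsub>M\<^esub> s \<in> carrier M"
  by (simp add: monoid.m_closed)

lemma act_hom_onto_image: "act_hom M A act B act' f \<Longrightarrow> act_hom M A act (f ` A) act' f"
  unfolding act_hom_def by blast

lemma right_act_image:
  assumes A: "right_act M A act" and B: "right_act M B act'" and f: "act_hom M A act B act' f"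
  shows "right_act M (f ` A) act'"
proof -
  have "f ` A \<subseteq> B"
    using act_hom_closed[OF f] by blast
  moreover have "act' (f x) s \<in> f ` A" if "x \<in> A" "s \<in> carrier M" for x s
    using that A act_hom_act[OF f] unfolding right_act_def by (metis image_eqI)
  ultimately show ?thesis
    using B unfolding right_act_def by blast
qed

lemma free_hom_right_mult_image:
  "free_hom (right_mult M) x ` free_act_carrier M n =
    {y \<otimes>\<^bsub>M\<^esub> s | y s. y \<in> x ` {..<n} \<and> s \<in> carrier M}"
proof (intro equalityI subsetI)
  fix z assume "z \<in> free_hom (right_mult M) x ` free_act_carrier M n"
  then obtain i s where "i < n" "s \<in> carrier M" "z = x i \<otimes>\<^bsub>M\<^esub> s"
    unfolding free_hom_def free_act_carrier_def by auto
  then show "z \<in> {y \<otimes>\<^bsub>M\<^esub> s | y s. y \<in> x ` {..<n} \<and> s \<in> carrier M}"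
    by blast
next
  fix z assume "z \<in> {y \<otimes>\<^bsub>M\<^esub> s | y s. y \<in> x ` {..<n} \<and> s \<in> carrier M}"
  then obtain i s where "i < n" "s \<in> carrier M" "z = free_hom (right_mult M) x (i, s)"
    unfolding free_hom_def by auto
  then show "z \<in> free_hom (right_mult M) x ` free_act_carrier M n"
    unfolding free_act_carrier_def by auto
qed

lemma fg_right_ideal_iff_free_hom_image:
  "fg_right_ideal M I \<longleftrightarrow>
    (\<exists>n x. (\<forall>i<n. x i \<in> carrier M) \<and> I = free_hom (right_mult M) x ` free_act_carrier M n)"
proof -
  have "(\<exists>X. finite X \<and> X \<subseteq> carrier M \<and> I = R X) \<longleftrightarrow>
      (\<exists>(n :: nat) x. (\<forall>i<n. x i \<in> carrier M) \<and> I = R (x ` {..<n}))" for R :: "'a set \<Rightarrow> 'a set"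
  proof
    assume "\<exists>X. finite X \<and> X \<subseteq> carrier M \<and> I = R X"
    then obtain X where X: "finite X" "X \<subseteq> carrier M" "I = R X"
      by blast
    obtain xs where "set xs = X"
      using finite_list[OF X(1)] by blast
    then have "nth xs ` {..<length xs} = X"
      by (auto simp: in_set_conv_nth)
    with X have "(\<forall>i<length xs. xs ! i \<in> carrier M) \<and> I = R (nth xs ` {..<length xs})"
      by auto
    then show "\<exists>(n::nat) x. (\<forall>i<n. x i \<in> carrier M) \<and> I = R (x ` {..<n})"
      by blast
  next
    assume "\<exists>(n::nat) x. (\<forall>i<n. x i \<in> carrier M) \<and> I = R (x ` {..<n})"
    then obtain n :: nat and x where "\<forall>i<n. x i \<in> carrier M" "I = R (x ` {..<n})"
      by blast
    then have "finite (x ` {..<n}) \<and> x ` {..<n} \<subseteq> carrier M \<and> I = R (x ` {..<n})"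
      by auto
    then show "\<exists>X. finite X \<and> X \<subseteq> carrier M \<and> I = R X"
      by blast
  qed
  then show ?thesis
    unfolding fg_right_ideal_def free_hom_right_mult_image .
qed

text \<open>\<open>free_hom (right_mult M) x\<close> is the canonical presentation of the right ideal
  \<open>x\<^sub>0M \<union> \<dots> \<union> x\<^bsub>n-1\<^esub>M\<close> by the free act on \<open>n\<close> generators.\<close>
definition fg_ideal_relations :: "'a monoid \<Rightarrow> bool" where
  "fg_ideal_relations M \<longleftrightarrow> (\<forall>n x. (\<forall>i<n. x i \<in> carrier M) \<longrightarrow>
     fg_right_congruence M (free_act_carrier M n) (free_action M)
       (kernel_rel (free_act_carrier M n) (free_hom (right_mult M) x)))"

lemma fg_ideal_relationsD:
  "fg_ideal_relations M \<Longrightarrow> \<forall>i<n. x i \<in> carrier M \<Longrightarrow>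
    fg_right_congruence M (free_act_carrier M n) (free_action M)
      (kernel_rel (free_act_carrier M n) (free_hom (right_mult M) x))"
  unfolding fg_ideal_relations_def by blast

lemma finitely_presented_act_iff:
  "finitely_presented_act M A act \<longleftrightarrow> right_act M A act \<and>
    (\<exists>n f. act_hom M (free_act_carrier M n) (free_action M) A act f \<and> f ` free_act_carrier M n = A \<and>
      fg_right_congruence M (free_act_carrier M n) (free_action M) (kernel_rel (free_act_carrier M n) f))"
  unfolding finitely_presented_act_def kernel_rel_def ..

lemma canonical_presentation:
  assumes M: "monoid M" and x: "\<forall>i<n. x i \<in> carrier M"
  defines "I \<equiv> free_hom (right_mult M) x ` free_act_carrier M n"
  shows "act_hom M (free_act_carrier M n) (free_action M) I (right_mult M) (free_hom (right_mult M) x)"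
    and "right_act M I (right_mult M)"
proof -
  have hom: "act_hom M (free_act_carrier M n) (free_action M) (carrier M) (right_mult M)
      (free_hom (right_mult M) x)"
    using x by (intro act_hom_free_hom right_act_right_mult M) simp
  then show "act_hom M (free_act_carrier M n) (free_action M) I (right_mult M) (free_hom (right_mult M) x)"
    unfolding I_def by (rule act_hom_onto_image)
  show "right_act M I (right_mult M)"
    unfolding I_def by (rule right_act_image[OF right_act_free_act[OF M] right_act_right_mult[OF M] hom])
qed

lemma weakly_right_coherent_fg_ideal_relations:
  assumes M: "monoid M" and wrc: "weakly_right_coherent M"
  shows "fg_ideal_relations M"
  unfolding fg_ideal_relations_def
proof (intro allI impI)
  fix n :: nat and x assume x: "\<forall>i<n. x i \<in> carrier M"
  let ?I = "free_hom (right_mult M) x ` free_act_carrier M n"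
  have "fg_right_ideal M ?I"
    unfolding fg_right_ideal_iff_free_hom_image using x by blast
  then have "finitely_presented_act M ?I (right_mult M)"
    using wrc unfolding weakly_right_coherent_def by blast
  then obtain m g where "act_hom M (free_act_carrier M m) (free_action M) ?I (right_mult M) g"
    "g ` free_act_carrier M m = ?I"
    "fg_right_congruence M (free_act_carrier M m) (free_action M) (kernel_rel (free_act_carrier M m) g)"
    unfolding finitely_presented_act_iff by blast
  from fg_kernel_rel_transfer[OF M this canonical_presentation(1)[OF M x]]
  show "fg_right_congruence M (free_act_carrier M n) (free_action M)
      (kernel_rel (free_act_carrier M n) (free_hom (right_mult M) x))"
    by simp
qed

lemma fg_ideal_relations_weakly_right_coherent:
  assumes M: "monoid M" and rel: "fg_ideal_relations M"
  shows "weakly_right_coherent M"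
  unfolding weakly_right_coherent_def
proof (intro allI impI)
  fix I assume "fg_right_ideal M I"
  then obtain n x where x: "\<forall>i<n. x i \<in> carrier M"
    and I: "I = free_hom (right_mult M) x ` free_act_carrier M n"
    unfolding fg_right_ideal_iff_free_hom_image by blast
  from fg_ideal_relationsD[OF rel x] show "finitely_presented_act M I (right_mult M)"
    unfolding finitely_presented_act_iff I using canonical_presentation[OF M x] by blast
qed

section \<open>Right ideal Howson and finitely right equated monoids\<close>

definition right_ideal_gen :: "'a monoid \<Rightarrow> 'a set \<Rightarrow> 'a set" where
  "right_ideal_gen M C = {c \<otimes>\<^bsub>M\<^esub> s | c s. c \<in> C \<and> s \<in> carrier M}"

abbreviation principal_right_ideal :: "'a monoid \<Rightarrow> 'a \<Rightarrow> 'a set" where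
  "principal_right_ideal M a \<equiv> right_ideal_gen M {a}"

text \<open>Right ideal Howson, tested on principal right ideals only; this suffices because a
  finitely generated right ideal is a finite union of principal ones.\<close>
definition principal_right_ideal_Howson :: "'a monoid \<Rightarrow> bool" where
  "principal_right_ideal_Howson M \<longleftrightarrow> (\<forall>a\<in>carrier M. \<forall>b\<in>carrier M. \<exists>C. finite C \<and> C \<subseteq> carrier M \<and>
     principal_right_ideal M a \<inter> principal_right_ideal M b = right_ideal_gen M C)"

definition right_annihilator :: "'a monoid \<Rightarrow> 'a \<Rightarrow> ('a \<times> 'a) set" where
  "right_annihilator M a = {(s, t). s \<in> carrier M \<and> t \<in> carrier M \<and> a \<otimes>\<^bsub>M\<^esub> s = a \<otimes>\<^bsub>M\<^esub> t}"

definition finitely_right_equated :: "'a monoid \<Rightarrow> bool" where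
  "finitely_right_equated M \<longleftrightarrow>
     (\<forall>a\<in>carrier M. fg_right_congruence M (carrier M) (right_mult M) (right_annihilator M a))"

lemma finitely_right_equatedD:
  "finitely_right_equated M \<Longrightarrow> a \<in> carrier M \<Longrightarrow>
    fg_right_congruence M (carrier M) (right_mult M) (right_annihilator M a)"
  unfolding finitely_right_equated_def by blast

lemma right_ideal_gen_mult:
  assumes M: "monoid M" and C: "C \<subseteq> carrier M" and y: "y \<in> right_ideal_gen M C" and t: "t \<in> carrier M"
  shows "y \<otimes>\<^bsub>M\<^esub> t \<in> right_ideal_gen M C"
proof -
  obtain c s where cs: "c \<in> C" "s \<in> carrier M" "y = c \<otimes>\<^bsub>M\<^esub> s"
    using y unfolding right_ideal_gen_def by blast
  then have "y \<otimes>\<^bsub>M\<^esub> t = c \<otimes>\<^bsub>M\<^esub> (s \<otimes>\<^bsub>M\<^esub> t)" "s \<otimes>\<^bsub>M\<^esub> t \<in> carrier M"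
    using C t by (auto simp: monoid.m_assoc[OF M] monoid.m_closed[OF M])
  with cs(1) show ?thesis
    unfolding right_ideal_gen_def by blast
qed

lemma right_ideal_gen_incl: "monoid M \<Longrightarrow> C \<subseteq> carrier M \<Longrightarrow> C \<subseteq> right_ideal_gen M C"
  unfolding right_ideal_gen_def by (force simp: monoid.r_one monoid.one_closed)

lemma right_ideal_gen_subset:
  assumes M: "monoid M" and D: "D \<subseteq> carrier M" and "C \<subseteq> right_ideal_gen M D"
  shows "right_ideal_gen M C \<subseteq> right_ideal_gen M D"
  using assms right_ideal_gen_mult[OF M D] unfolding right_ideal_gen_def[of M C] by blast

lemma right_annihilator_right_congruence:
  assumes M: "monoid M" and a: "a \<in> carrier M"
  shows "right_congruence M (carrier M) (right_mult M) (right_annihilator M a)"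
proof (rule right_congruenceI)
  fix s t u assume "(s, t) \<in> right_annihilator M a" "u \<in> carrier M"
  then show "(s \<otimes>\<^bsub>M\<^esub> u, t \<otimes>\<^bsub>M\<^esub> u) \<in> right_annihilator M a"
    using a unfolding right_annihilator_def
    by (simp add: monoid.m_closed[OF M] monoid.m_assoc[OF M, symmetric])
qed (auto simp: right_annihilator_def)

lemma kernel_rel_free_hom_right_mult:
  "((i, s), (j, t)) \<in> kernel_rel (free_act_carrier M n) (free_hom (right_mult M) x) \<longleftrightarrow>
    i < n \<and> j < n \<and> s \<in> carrier M \<and> t \<in> carrier M \<and> x i \<otimes>\<^bsub>M\<^esub> s = x j \<otimes>\<^bsub>M\<^esub> t"
  unfolding kernel_rel_def free_act_carrier_def free_hom_def by auto

lemma kernel_rel_free_hom_right_mult_mem: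
  assumes "(p, q) \<in> kernel_rel (free_act_carrier M n) (free_hom (right_mult M) x)"
  shows "free_hom (right_mult M) x p \<in> principal_right_ideal M (x (fst p)) \<inter> principal_right_ideal M (x (fst q))"
  using assms unfolding kernel_rel_def free_act_carrier_def free_hom_def right_ideal_gen_def by force

lemma right_congruence_kernel_rel_crossing:
  assumes M: "monoid M" and x: "\<forall>i<n. x i \<in> carrier M"
    and J: "\<And>y u. y \<in> J \<Longrightarrow> u \<in> carrier M \<Longrightarrow> y \<otimes>\<^bsub>M\<^esub> u \<in> J"
  defines "K \<equiv> kernel_rel (free_act_carrier M n) (free_hom (right_mult M) x)"
  shows "right_congruence M (free_act_carrier M n) (free_action M)
    {(p, q). (p, q) \<in> K \<and> (fst p = fst q \<or> free_hom (right_mult M) x p \<in> J)}"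
    (is "right_congruence M ?F _ ?\<rho>")
proof -
  let ?\<pi> = "free_hom (right_mult M) x"
  have hom: "act_hom M ?F (free_action M) (carrier M) (right_mult M) ?\<pi>"
    using x by (intro act_hom_free_hom right_act_right_mult M) simp
  have K: "right_congruence M ?F (free_action M) K"
    unfolding K_def by (rule right_congruence_kernel_rel[OF free_action_closed[OF M] hom])
  show ?thesis
  proof (rule right_congruenceI)
    fix p q u assume "(p, q) \<in> ?\<rho>" and u: "u \<in> carrier M"
    then have pq: "(p, q) \<in> K" and alt: "fst p = fst q \<or> ?\<pi> p \<in> J"
      by auto
    then have "?\<pi> (free_action M p u) = ?\<pi> p \<otimes>\<^bsub>M\<^esub> u"
      using u act_hom_act[OF hom] unfolding K_def kernel_rel_def by simp
    then have "fst (free_action M p u) = fst (free_action M q u) \<or> ?\<pi> (free_action M p u) \<in> J"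
      using alt J[OF _ u] by (auto simp: free_action_def)
    with right_congruence_compat[OF K pq u] show "(free_action M p u, free_action M q u) \<in> ?\<rho>"
      by blast
  next
    fix p assume "p \<in> ?F"
    then show "(p, p) \<in> ?\<rho>"
      using right_congruence_refl[OF K] by simp
  next
    fix p q assume "(p, q) \<in> ?\<rho>"
    then show "(q, p) \<in> ?\<rho>"
      using right_congruence_sym[OF K] unfolding K_def kernel_rel_def by auto
  next
    fix p q r assume "(p, q) \<in> ?\<rho>" "(q, r) \<in> ?\<rho>"
    then show "(p, r) \<in> ?\<rho>"
      using right_congruence_trans[OF K] unfolding K_def kernel_rel_def by auto
  qed (use right_congruence_subset[OF K] in auto)
qed

lemma kernel_rel_crossing:
  assumes M: "monoid M" and x: "\<forall>i<n. x i \<in> carrier M"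
    and H: "kernel_rel (free_act_carrier M n) (free_hom (right_mult M) x) =
      gen_right_congruence M (free_act_carrier M n) (free_action M) H"
    and pq: "(p, q) \<in> kernel_rel (free_act_carrier M n) (free_hom (right_mult M) x)" "fst p \<noteq> fst q"
  shows "free_hom (right_mult M) x p \<in>
    right_ideal_gen M {free_hom (right_mult M) x p' | p' q'. (p', q') \<in> H \<and> fst p' \<noteq> fst q'}"
proof -
  let ?F = "free_act_carrier M n" and ?\<pi> = "free_hom (right_mult M) x"
  let ?K = "kernel_rel ?F ?\<pi>" and ?C = "{?\<pi> p' | p' q'. (p', q') \<in> H \<and> fst p' \<noteq> fst q'}"
  have H_K: "H \<subseteq> ?K"
    unfolding H by (rule gen_right_congruence_incl)
  have C: "?C \<subseteq> carrier M"
    using H_K x unfolding kernel_rel_def free_act_carrier_def free_hom_def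
    by (force simp: monoid.m_closed[OF M])
  let ?\<rho> = "{(p, q). (p, q) \<in> ?K \<and> (fst p = fst q \<or> ?\<pi> p \<in> right_ideal_gen M ?C)}"
  have "H \<subseteq> ?\<rho>"
  proof
    fix h assume h: "h \<in> H"
    obtain p' q' where h_eq: "h = (p', q')"
      by (cases h)
    have "fst p' \<noteq> fst q' \<Longrightarrow> ?\<pi> p' \<in> ?C"
      using h unfolding h_eq by blast
    then show "h \<in> ?\<rho>"
      using h H_K right_ideal_gen_incl[OF M C] unfolding h_eq by auto
  qed
  then have "?K \<subseteq> ?\<rho>"
    unfolding H using right_congruence_kernel_rel_crossing[OF M x right_ideal_gen_mult[OF M C]]
    by (intro gen_right_congruence_least) (simp_all add: H)
  with pq show ?thesis
    by auto
qed

lemma fg_ideal_relations_principal_right_ideal_Howson: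
  assumes M: "monoid M" and rel: "fg_ideal_relations M"
  shows "principal_right_ideal_Howson M"
  unfolding principal_right_ideal_Howson_def
proof (intro ballI)
  fix a b assume a: "a \<in> carrier M" and b: "b \<in> carrier M"
  define x :: "nat \<Rightarrow> 'a" where "x i = (if i = 0 then a else b)" for i
  let ?F = "free_act_carrier M 2" and ?\<pi> = "free_hom (right_mult M) x"
  let ?K = "kernel_rel ?F ?\<pi>"
  have x: "\<forall>i<2. x i \<in> carrier M"
    using a b unfolding x_def by simp
  obtain H where H: "finite H" "?K = gen_right_congruence M ?F (free_action M) H"
    using fg_ideal_relationsD[OF rel x] by (rule fg_right_congruenceE)
  define C where "C = {?\<pi> p | p q. (p, q) \<in> H \<and> fst p \<noteq> fst q}"
  have "?\<pi> p \<in> principal_right_ideal M a \<inter> principal_right_ideal M b"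
    if "(p, q) \<in> H" "fst p \<noteq> fst q" for p q
  proof -
    have pq: "(p, q) \<in> ?K"
      using that(1) gen_right_congruence_incl unfolding H(2) by blast
    then have "{x (fst p), x (fst q)} = {a, b}"
      using that(2) unfolding kernel_rel_def free_act_carrier_def x_def by auto
    with kernel_rel_free_hom_right_mult_mem[OF pq] show ?thesis
      by (auto simp: doubleton_eq_iff)
  qed
  then have C: "C \<subseteq> principal_right_ideal M a \<inter> principal_right_ideal M b"
    unfolding C_def by blast
  then have C_carrier: "C \<subseteq> carrier M"
    using a unfolding right_ideal_gen_def by (auto simp: monoid.m_closed[OF M])
  have "principal_right_ideal M a \<inter> principal_right_ideal M b \<subseteq> right_ideal_gen M C"
  proof
    fix y assume "y \<in> principal_right_ideal M a \<inter> principal_right_ideal M b"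
    then obtain s t where st: "s \<in> carrier M" "t \<in> carrier M" "y = a \<otimes>\<^bsub>M\<^esub> s" "y = b \<otimes>\<^bsub>M\<^esub> t"
      unfolding right_ideal_gen_def by blast
    then have "((0, s), (1, t)) \<in> ?K"
      by (simp add: kernel_rel_free_hom_right_mult x_def)
    from kernel_rel_crossing[OF M x H(2) this] show "y \<in> right_ideal_gen M C"
      using st unfolding C_def by (simp add: free_hom_def x_def)
  qed
  moreover have "right_ideal_gen M C \<subseteq> principal_right_ideal M a \<inter> principal_right_ideal M b"
    using C a b right_ideal_gen_subset[OF M, of "{a}" C] right_ideal_gen_subset[OF M, of "{b}" C]
    by auto
  moreover have "finite C"
  proof (rule finite_subset)
    show "C \<subseteq> ?\<pi> ` fst ` H"
      unfolding C_def by force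
  qed (simp add: H(1))
  ultimately show "\<exists>C. finite C \<and> C \<subseteq> carrier M \<and>
      principal_right_ideal M a \<inter> principal_right_ideal M b = right_ideal_gen M C"
    using C_carrier by blast
qed

text \<open>For the single generator \<open>a\<close> the kernel of the canonical presentation is the right
  annihilator of \<open>a\<close>, moved into the free act by \<open>s \<mapsto> (0, s)\<close>.\<close>
lemma fg_ideal_relations_finitely_right_equated:
  assumes M: "monoid M" and rel: "fg_ideal_relations M"
  shows "finitely_right_equated M"
  unfolding finitely_right_equated_def
proof
  fix a assume a: "a \<in> carrier M"
  define x :: "nat \<Rightarrow> 'a" where "x i = a" for i
  have "\<forall>i<1. x i \<in> carrier M"
    using a unfolding x_def by simp
  with rel have K: "fg_right_congruence M (free_act_carrier M 1) (free_action M)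
      (kernel_rel (free_act_carrier M 1) (free_hom (right_mult M) x))"
    by (rule fg_ideal_relationsD)
  show "fg_right_congruence M (carrier M) (right_mult M) (right_annihilator M a)"
  proof (rule fg_right_congruence_retract[OF free_action_closed[OF M] K
        right_annihilator_right_congruence[OF M a], where h = "\<lambda>u. u" and \<psi> = "Pair 0"])
    show "snd \<in> free_act_carrier M 1 \<rightarrow> carrier M"
      unfolding free_act_carrier_def by auto
    show "\<And>p q. (p, q) \<in> kernel_rel (free_act_carrier M 1) (free_hom (right_mult M) x) \<Longrightarrow>
        (snd p, snd q) \<in> right_annihilator M a"
      by (auto simp: kernel_rel_free_hom_right_mult right_annihilator_def x_def)
    show "\<And>s t. (s, t) \<in> right_annihilator M a \<Longrightarrow>
        ((0, s), (0, t)) \<in> kernel_rel (free_act_carrier M 1) (free_hom (right_mult M) x) \<and>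
        snd (0 :: nat, s) = s \<and> snd (0 :: nat, t) = t"
      by (simp add: kernel_rel_free_hom_right_mult right_annihilator_def x_def)
  qed (auto simp: free_action_def)
qed

text \<open>Two elements \<open>(i, s)\<close>, \<open>(j, t)\<close> of the free act with \<open>x\<^sub>i s = x\<^sub>j t\<close> are linked
  through \<open>(i, u m)\<close> and \<open>(j, v m)\<close>, where \<open>x\<^sub>i u = x\<^sub>j v\<close> is a generator of \<open>x\<^sub>iM \<inter> x\<^sub>jM\<close>;
  the outer links are annihilator relations inside one component.\<close>
lemma kernel_rel_free_hom_right_mult_subset:
  assumes M: "monoid M" and \<rho>: "right_congruence M (free_act_carrier M n) (free_action M) \<rho>"
    and same: "\<And>i s t. i < n \<Longrightarrow> (s, t) \<in> right_annihilator M (x i) \<Longrightarrow> ((i, s), (i, t)) \<in> \<rho>"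
    and cross: "\<And>i j s t. i < n \<Longrightarrow> j < n \<Longrightarrow> s \<in> carrier M \<Longrightarrow> t \<in> carrier M \<Longrightarrow>
      x i \<otimes>\<^bsub>M\<^esub> s = x j \<otimes>\<^bsub>M\<^esub> t \<Longrightarrow> \<exists>u v m. u \<in> carrier M \<and> v \<in> carrier M \<and> m \<in> carrier M \<and>
        ((i, u), (j, v)) \<in> \<rho> \<and> x i \<otimes>\<^bsub>M\<^esub> s = x i \<otimes>\<^bsub>M\<^esub> (u \<otimes>\<^bsub>M\<^esub> m) \<and>
        x j \<otimes>\<^bsub>M\<^esub> t = x j \<otimes>\<^bsub>M\<^esub> (v \<otimes>\<^bsub>M\<^esub> m)"
  shows "kernel_rel (free_act_carrier M n) (free_hom (right_mult M) x) \<subseteq> \<rho>"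
proof clarify
  fix i s j t
  assume "((i, s), (j, t)) \<in> kernel_rel (free_act_carrier M n) (free_hom (right_mult M) x)"
  then have ij: "i < n" "j < n" and st: "s \<in> carrier M" "t \<in> carrier M"
    and eq: "x i \<otimes>\<^bsub>M\<^esub> s = x j \<otimes>\<^bsub>M\<^esub> t"
    by (simp_all add: kernel_rel_free_hom_right_mult)
  obtain u v m where uvm: "u \<in> carrier M" "v \<in> carrier M" "m \<in> carrier M"
    and link: "((i, u), (j, v)) \<in> \<rho>"
    and s: "x i \<otimes>\<^bsub>M\<^esub> s = x i \<otimes>\<^bsub>M\<^esub> (u \<otimes>\<^bsub>M\<^esub> m)" and t: "x j \<otimes>\<^bsub>M\<^esub> t = x j \<otimes>\<^bsub>M\<^esub> (v \<otimes>\<^bsub>M\<^esub> m)"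
    using cross[OF ij st eq] by blast
  have "((i, s), (i, u \<otimes>\<^bsub>M\<^esub> m)) \<in> \<rho>"
    using same[OF ij(1)] st uvm s by (simp add: right_annihilator_def monoid.m_closed[OF M])
  moreover have "((i, u \<otimes>\<^bsub>M\<^esub> m), (j, v \<otimes>\<^bsub>M\<^esub> m)) \<in> \<rho>"
    using right_congruence_compat[OF \<rho> link uvm(3)] by (simp add: free_action_def)
  moreover have "((j, v \<otimes>\<^bsub>M\<^esub> m), (j, t)) \<in> \<rho>"
    using same[OF ij(2)] st uvm t by (simp add: right_annihilator_def monoid.m_closed[OF M])
  ultimately show "((i, s), (j, t)) \<in> \<rho>"
    by (blast intro: right_congruence_trans[OF \<rho>])
qed

lemma finite_witnesses:
  assumes "finite A" and "\<forall>a\<in>A. \<exists>b. P a b"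
  obtains B where "finite B" "\<forall>b\<in>B. \<exists>a\<in>A. P a b" "\<forall>a\<in>A. \<exists>b\<in>B. P a b"
proof -
  obtain f where "\<forall>a\<in>A. P a (f a)"
    using bchoice[OF assms(2)] by blast
  then show thesis
    using assms(1) by (intro that[of "f ` A"]) auto
qed

lemma annihilator_relations:
  assumes M: "monoid M" and fre: "finitely_right_equated M" and x: "\<forall>i<n. x i \<in> carrier M"
  obtains H where "finite H" "H \<subseteq> kernel_rel (free_act_carrier M n) (free_hom (right_mult M) x)"
    and "\<And>\<rho> i s t. right_congruence M (free_act_carrier M n) (free_action M) \<rho> \<Longrightarrow> H \<subseteq> \<rho> \<Longrightarrow>
      i < n \<Longrightarrow> (s, t) \<in> right_annihilator M (x i) \<Longrightarrow> ((i, s), (i, t)) \<in> \<rho>"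
proof -
  have "\<forall>i\<in>{..<n}. \<exists>H. finite H \<and> H \<subseteq> carrier M \<times> carrier M \<and>
      right_annihilator M (x i) = gen_right_congruence M (carrier M) (right_mult M) H"
  proof
    fix i assume "i \<in> {..<n}"
    then have "fg_right_congruence M (carrier M) (right_mult M) (right_annihilator M (x i))"
      using finitely_right_equatedD[OF fre] x by simp
    then show "\<exists>H. finite H \<and> H \<subseteq> carrier M \<times> carrier M \<and>
        right_annihilator M (x i) = gen_right_congruence M (carrier M) (right_mult M) H"
      unfolding fg_right_congruence_def by blast
  qed
  from bchoice[OF this] obtain Hs where Hs: "\<forall>i\<in>{..<n}. finite (Hs i) \<and> Hs i \<subseteq> carrier M \<times> carrier M \<and>
      right_annihilator M (x i) = gen_right_congruence M (carrier M) (right_mult M) (Hs i)"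
    by blast
  define H where "H = (\<Union>i<n. map_prod (Pair i) (Pair i) ` Hs i)"
  show thesis
  proof (rule that)
    show "finite H"
      using Hs unfolding H_def by simp
    have "s \<in> carrier M \<and> t \<in> carrier M \<and> x i \<otimes>\<^bsub>M\<^esub> s = x i \<otimes>\<^bsub>M\<^esub> t"
      if "i < n" "(s, t) \<in> Hs i" for i s t
      using Hs that gen_right_congruence_incl unfolding right_annihilator_def by blast
    then show "H \<subseteq> kernel_rel (free_act_carrier M n) (free_hom (right_mult M) x)"
      unfolding H_def by (auto simp: kernel_rel_free_hom_right_mult)
  next
    fix \<rho> i s t assume \<rho>: "right_congruence M (free_act_carrier M n) (free_action M) \<rho>"
      and "H \<subseteq> \<rho>" and i: "i < n" and "(s, t) \<in> right_annihilator M (x i)"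
    then have "(s, t) \<in> gen_right_congruence M (carrier M) (right_mult M) (Hs i)"
      using Hs by simp
    then show "((i, s), (i, t)) \<in> \<rho>"
    proof (rule gen_right_congruence_map[OF _ right_mult_closed[OF M] \<rho>, where h = "\<lambda>u. u"])
      show "Pair i \<in> carrier M \<rightarrow> free_act_carrier M n"
        using i unfolding free_act_carrier_def by simp
      show "\<And>p q. (p, q) \<in> Hs i \<Longrightarrow> ((i, p), (i, q)) \<in> \<rho>"
        using \<open>H \<subseteq> \<rho>\<close> i unfolding H_def by auto
    qed (use Hs i in \<open>auto simp: free_action_def\<close>)
  qed
qed

definition generating_solutions :: "'a monoid \<Rightarrow> 'a \<Rightarrow> 'a \<Rightarrow> ('a \<times> 'a) set \<Rightarrow> bool" where
  "generating_solutions M a b R \<longleftrightarrow> finite R \<and>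
    R \<subseteq> {(u, v). u \<in> carrier M \<and> v \<in> carrier M \<and> a \<otimes>\<^bsub>M\<^esub> u = b \<otimes>\<^bsub>M\<^esub> v} \<and>
    (\<forall>s\<in>carrier M. \<forall>t\<in>carrier M. a \<otimes>\<^bsub>M\<^esub> s = b \<otimes>\<^bsub>M\<^esub> t \<longrightarrow>
      (\<exists>(u, v)\<in>R. \<exists>m\<in>carrier M. a \<otimes>\<^bsub>M\<^esub> s = a \<otimes>\<^bsub>M\<^esub> (u \<otimes>\<^bsub>M\<^esub> m) \<and> b \<otimes>\<^bsub>M\<^esub> t = b \<otimes>\<^bsub>M\<^esub> (v \<otimes>\<^bsub>M\<^esub> m)))"

text \<open>Choose, for each of the finitely many generators \<open>c\<close> of \<open>aM \<inter> bM\<close>, a solution of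
  \<open>c = a u = b v\<close>.\<close>
lemma principal_right_ideal_Howson_generating_solutions:
  assumes M: "monoid M" and rih: "principal_right_ideal_Howson M"
    and a: "a \<in> carrier M" and b: "b \<in> carrier M"
  shows "\<exists>R. generating_solutions M a b R"
proof -
  obtain C where C: "finite C" "C \<subseteq> carrier M"
    "principal_right_ideal M a \<inter> principal_right_ideal M b = right_ideal_gen M C"
    using rih a b unfolding principal_right_ideal_Howson_def by meson
  define P where "P c uv \<longleftrightarrow> fst uv \<in> carrier M \<and> snd uv \<in> carrier M \<and>
      c = a \<otimes>\<^bsub>M\<^esub> fst uv \<and> c = b \<otimes>\<^bsub>M\<^esub> snd uv" for c uv
  have "\<forall>c\<in>C. \<exists>uv. P c uv"
  proof
    fix c assume "c \<in> C"
    then have "c \<in> principal_right_ideal M a \<inter> principal_right_ideal M b"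
      using right_ideal_gen_incl[OF M C(2)] C(3) by blast
    then obtain u v where "u \<in> carrier M" "v \<in> carrier M" "c = a \<otimes>\<^bsub>M\<^esub> u" "c = b \<otimes>\<^bsub>M\<^esub> v"
      unfolding right_ideal_gen_def by blast
    then have "P c (u, v)"
      unfolding P_def by simp
    then show "\<exists>uv. P c uv" ..
  qed
  with C(1) obtain R where R: "finite R" "\<forall>uv\<in>R. \<exists>c\<in>C. P c uv" "\<forall>c\<in>C. \<exists>uv\<in>R. P c uv"
    by (rule finite_witnesses)
  have "R \<subseteq> {(u, v). u \<in> carrier M \<and> v \<in> carrier M \<and> a \<otimes>\<^bsub>M\<^esub> u = b \<otimes>\<^bsub>M\<^esub> v}"
    using R(2) unfolding P_def by fastforce
  moreover have "\<exists>(u, v)\<in>R. \<exists>m\<in>carrier M. a \<otimes>\<^bsub>M\<^esub> s = a \<otimes>\<^bsub>M\<^esub> (u \<otimes>\<^bsub>M\<^esub> m) \<and> b \<otimes>\<^bsub>M\<^esub> t = b \<otimes>\<^bsub>M\<^esub> (v \<otimes>\<^bsub>M\<^esub> m)"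
    if st: "s \<in> carrier M" "t \<in> carrier M" and eq: "a \<otimes>\<^bsub>M\<^esub> s = b \<otimes>\<^bsub>M\<^esub> t" for s t
  proof -
    have "a \<otimes>\<^bsub>M\<^esub> s \<in> principal_right_ideal M a \<inter> principal_right_ideal M b"
      using st eq unfolding right_ideal_gen_def by blast
    then obtain c m where cm: "c \<in> C" "m \<in> carrier M" "a \<otimes>\<^bsub>M\<^esub> s = c \<otimes>\<^bsub>M\<^esub> m"
      unfolding C(3) by (auto simp: right_ideal_gen_def)
    then obtain u v where uv: "(u, v) \<in> R" "P c (u, v)"
      using R(3) by fast
    then have "u \<in> carrier M" "v \<in> carrier M" "a \<otimes>\<^bsub>M\<^esub> s = (a \<otimes>\<^bsub>M\<^esub> u) \<otimes>\<^bsub>M\<^esub> m"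
      "b \<otimes>\<^bsub>M\<^esub> t = (b \<otimes>\<^bsub>M\<^esub> v) \<otimes>\<^bsub>M\<^esub> m"
      using cm(3) eq unfolding P_def by auto
    with a b cm(2) have "a \<otimes>\<^bsub>M\<^esub> s = a \<otimes>\<^bsub>M\<^esub> (u \<otimes>\<^bsub>M\<^esub> m)" "b \<otimes>\<^bsub>M\<^esub> t = b \<otimes>\<^bsub>M\<^esub> (v \<otimes>\<^bsub>M\<^esub> m)"
      by (simp_all add: monoid.m_assoc[OF M])
    with uv(1) cm(2) show ?thesis
      by blast
  qed
  ultimately show ?thesis
    unfolding generating_solutions_def using R(1) by (intro exI[where x = R] conjI ballI impI)
qed

lemma intersection_relations:
  assumes M: "monoid M" and rih: "principal_right_ideal_Howson M" and x: "\<forall>i<n. x i \<in> carrier M"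
  obtains H where "finite H" "H \<subseteq> kernel_rel (free_act_carrier M n) (free_hom (right_mult M) x)"
    and "\<And>i j s t. i < n \<Longrightarrow> j < n \<Longrightarrow> s \<in> carrier M \<Longrightarrow> t \<in> carrier M \<Longrightarrow>
      x i \<otimes>\<^bsub>M\<^esub> s = x j \<otimes>\<^bsub>M\<^esub> t \<Longrightarrow> \<exists>u v m. u \<in> carrier M \<and> v \<in> carrier M \<and> m \<in> carrier M \<and>
        ((i, u), (j, v)) \<in> H \<and> x i \<otimes>\<^bsub>M\<^esub> s = x i \<otimes>\<^bsub>M\<^esub> (u \<otimes>\<^bsub>M\<^esub> m) \<and>
        x j \<otimes>\<^bsub>M\<^esub> t = x j \<otimes>\<^bsub>M\<^esub> (v \<otimes>\<^bsub>M\<^esub> m)"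
proof -
  have "\<forall>ij\<in>{..<n} \<times> {..<n}. \<exists>R. generating_solutions M (x (fst ij)) (x (snd ij)) R"
  proof
    fix ij assume "ij \<in> {..<n} \<times> {..<n}"
    then have "x (fst ij) \<in> carrier M" "x (snd ij) \<in> carrier M"
      using x by auto
    then show "\<exists>R. generating_solutions M (x (fst ij)) (x (snd ij)) R"
      by (rule principal_right_ideal_Howson_generating_solutions[OF M rih])
  qed
  from bchoice[OF this] obtain R
    where R: "\<forall>ij\<in>{..<n} \<times> {..<n}. generating_solutions M (x (fst ij)) (x (snd ij)) (R ij)"
    by blast
  define H where "H = (\<Union>ij\<in>{..<n} \<times> {..<n}. map_prod (Pair (fst ij)) (Pair (snd ij)) ` R ij)"
  show thesis
  proof (rule that)
    show "finite H"
      using R unfolding H_def generating_solutions_def by simp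
    show "H \<subseteq> kernel_rel (free_act_carrier M n) (free_hom (right_mult M) x)"
    proof
      fix h assume "h \<in> H"
      then obtain ij u v where ij: "ij \<in> {..<n} \<times> {..<n}" and uv: "(u, v) \<in> R ij"
        and h: "h = ((fst ij, u), (snd ij, v))"
        unfolding H_def by auto
      then have "u \<in> carrier M" "v \<in> carrier M" "x (fst ij) \<otimes>\<^bsub>M\<^esub> u = x (snd ij) \<otimes>\<^bsub>M\<^esub> v"
        using bspec[OF R ij] unfolding generating_solutions_def by auto
      with ij show "h \<in> kernel_rel (free_act_carrier M n) (free_hom (right_mult M) x)"
        unfolding h by (auto simp: kernel_rel_free_hom_right_mult)
    qed
  next
    fix i j s t assume ij: "i < n" "j < n" and st: "s \<in> carrier M" "t \<in> carrier M"
      and eq: "x i \<otimes>\<^bsub>M\<^esub> s = x j \<otimes>\<^bsub>M\<^esub> t"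
    have Rij: "generating_solutions M (x i) (x j) (R (i, j))"
      using R ij by simp
    then have "\<exists>(u, v)\<in>R (i, j). \<exists>m\<in>carrier M. x i \<otimes>\<^bsub>M\<^esub> s = x i \<otimes>\<^bsub>M\<^esub> (u \<otimes>\<^bsub>M\<^esub> m) \<and>
        x j \<otimes>\<^bsub>M\<^esub> t = x j \<otimes>\<^bsub>M\<^esub> (v \<otimes>\<^bsub>M\<^esub> m)"
      using st eq unfolding generating_solutions_def by simp
    then obtain u v m where "(u, v) \<in> R (i, j)" "m \<in> carrier M"
      "x i \<otimes>\<^bsub>M\<^esub> s = x i \<otimes>\<^bsub>M\<^esub> (u \<otimes>\<^bsub>M\<^esub> m)" "x j \<otimes>\<^bsub>M\<^esub> t = x j \<otimes>\<^bsub>M\<^esub> (v \<otimes>\<^bsub>M\<^esub> m)"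
      by blast
    moreover from this have "u \<in> carrier M" "v \<in> carrier M"
      using Rij unfolding generating_solutions_def by auto
    moreover have "((i, u), (j, v)) \<in> H"
      using ij \<open>(u, v) \<in> R (i, j)\<close> unfolding H_def by force
    ultimately show "\<exists>u v m. u \<in> carrier M \<and> v \<in> carrier M \<and> m \<in> carrier M \<and>
        ((i, u), (j, v)) \<in> H \<and> x i \<otimes>\<^bsub>M\<^esub> s = x i \<otimes>\<^bsub>M\<^esub> (u \<otimes>\<^bsub>M\<^esub> m) \<and>
        x j \<otimes>\<^bsub>M\<^esub> t = x j \<otimes>\<^bsub>M\<^esub> (v \<otimes>\<^bsub>M\<^esub> m)"
      by blast
  qed
qed

lemma principal_right_ideal_Howson_finitely_right_equated_fg_ideal_relations:
  assumes M: "monoid M" and rih: "principal_right_ideal_Howson M" and fre: "finitely_right_equated M"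
  shows "fg_ideal_relations M"
  unfolding fg_ideal_relations_def
proof (intro allI impI)
  fix n :: nat and x assume x: "\<forall>i<n. x i \<in> carrier M"
  let ?F = "free_act_carrier M n"
  let ?K = "kernel_rel ?F (free_hom (right_mult M) x)"
  obtain H1 where H1: "finite H1" "H1 \<subseteq> ?K"
    and same: "\<And>\<rho> i s t. right_congruence M ?F (free_action M) \<rho> \<Longrightarrow> H1 \<subseteq> \<rho> \<Longrightarrow>
      i < n \<Longrightarrow> (s, t) \<in> right_annihilator M (x i) \<Longrightarrow> ((i, s), (i, t)) \<in> \<rho>"
    using annihilator_relations[OF M fre x] by blast
  obtain H2 where H2: "finite H2" "H2 \<subseteq> ?K"
    and cross: "\<And>i j s t. i < n \<Longrightarrow> j < n \<Longrightarrow> s \<in> carrier M \<Longrightarrow> t \<in> carrier M \<Longrightarrow>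
      x i \<otimes>\<^bsub>M\<^esub> s = x j \<otimes>\<^bsub>M\<^esub> t \<Longrightarrow> \<exists>u v m. u \<in> carrier M \<and> v \<in> carrier M \<and> m \<in> carrier M \<and>
        ((i, u), (j, v)) \<in> H2 \<and> x i \<otimes>\<^bsub>M\<^esub> s = x i \<otimes>\<^bsub>M\<^esub> (u \<otimes>\<^bsub>M\<^esub> m) \<and>
        x j \<otimes>\<^bsub>M\<^esub> t = x j \<otimes>\<^bsub>M\<^esub> (v \<otimes>\<^bsub>M\<^esub> m)"
    using intersection_relations[OF M rih x] by blast
  have hom: "act_hom M ?F (free_action M) (carrier M) (right_mult M) (free_hom (right_mult M) x)"
    using x by (intro act_hom_free_hom right_act_right_mult M) simp
  have K: "right_congruence M ?F (free_action M) ?K"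
    by (rule right_congruence_kernel_rel[OF free_action_closed[OF M] hom])
  let ?G = "gen_right_congruence M ?F (free_action M) (H1 \<union> H2)"
  have G: "right_congruence M ?F (free_action M) ?G"
    using H1(2) H2(2) right_congruence_subset[OF K]
    by (intro right_congruence_gen_right_congruence free_action_closed M) blast
  have "?K \<subseteq> ?G"
  proof (rule kernel_rel_free_hom_right_mult_subset[OF M G])
    show "\<And>i s t. i < n \<Longrightarrow> (s, t) \<in> right_annihilator M (x i) \<Longrightarrow> ((i, s), (i, t)) \<in> ?G"
      using same[OF G] gen_right_congruence_incl[of "H1 \<union> H2"] by blast
    show "\<And>i j s t. i < n \<Longrightarrow> j < n \<Longrightarrow> s \<in> carrier M \<Longrightarrow> t \<in> carrier M \<Longrightarrow>
      x i \<otimes>\<^bsub>M\<^esub> s = x j \<otimes>\<^bsub>M\<^esub> t \<Longrightarrow> \<exists>u v m. u \<in> carrier M \<and> v \<in> carrier M \<and> m \<in> carrier M \<and>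
        ((i, u), (j, v)) \<in> ?G \<and> x i \<otimes>\<^bsub>M\<^esub> s = x i \<otimes>\<^bsub>M\<^esub> (u \<otimes>\<^bsub>M\<^esub> m) \<and>
        x j \<otimes>\<^bsub>M\<^esub> t = x j \<otimes>\<^bsub>M\<^esub> (v \<otimes>\<^bsub>M\<^esub> m)"
      using cross gen_right_congruence_incl[of "H1 \<union> H2"] by blast
  qed
  then show "fg_right_congruence M ?F (free_action M) ?K"
    using H1 H2 by (intro fg_right_congruenceI[OF K]) auto
qed

theorem weakly_right_coherent_iff:
  "monoid M \<Longrightarrow> weakly_right_coherent M \<longleftrightarrow> principal_right_ideal_Howson M \<and> finitely_right_equated M"
  by (metis weakly_right_coherent_fg_ideal_relations fg_ideal_relations_weakly_right_coherent
      fg_ideal_relations_principal_right_ideal_Howson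
      fg_ideal_relations_finitely_right_equated
      principal_right_ideal_Howson_finitely_right_equated_fg_ideal_relations)

section \<open>Retracts and direct products\<close>

lemma hom_right_ideal_gen:
  assumes h: "h \<in> hom N M" and C: "C \<subseteq> carrier N" and y: "y \<in> right_ideal_gen N C"
  shows "h y \<in> right_ideal_gen M (h ` C)"
proof -
  obtain c s where "c \<in> C" "s \<in> carrier N" "y = c \<otimes>\<^bsub>N\<^esub> s"
    using y unfolding right_ideal_gen_def by blast
  moreover from this have "h y = h c \<otimes>\<^bsub>M\<^esub> h s" "h s \<in> carrier M"
    using C hom_mult[OF h] hom_in_carrier[OF h] by auto
  ultimately show ?thesis
    unfolding right_ideal_gen_def by blast
qed

text \<open>The homomorphisms \<open>\<iota>\<close> and \<open>\<pi>\<close> need not preserve the identity.\<close>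
lemma principal_right_ideal_Howson_retract:
  assumes M: "monoid M" and N: "monoid N" and \<pi>: "\<pi> \<in> hom N M" and \<iota>: "\<iota> \<in> hom M N"
    and retract: "\<And>x. x \<in> carrier M \<Longrightarrow> \<pi> (\<iota> x) = x"
    and rih: "principal_right_ideal_Howson N"
  shows "principal_right_ideal_Howson M"
  unfolding principal_right_ideal_Howson_def
proof (intro ballI)
  fix a b assume a: "a \<in> carrier M" and b: "b \<in> carrier M"
  then obtain C where C: "finite C" "C \<subseteq> carrier N"
    "principal_right_ideal N (\<iota> a) \<inter> principal_right_ideal N (\<iota> b) = right_ideal_gen N C"
    using rih hom_in_carrier[OF \<iota>] unfolding principal_right_ideal_Howson_def by meson
  have \<pi>C: "\<pi> ` C \<subseteq> carrier M"
    using C(2) hom_in_carrier[OF \<pi>] by blast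
  have "principal_right_ideal M a \<inter> principal_right_ideal M b \<subseteq> right_ideal_gen M (\<pi> ` C)"
  proof
    fix y assume y: "y \<in> principal_right_ideal M a \<inter> principal_right_ideal M b"
    then have "y \<in> carrier M"
      using a b unfolding right_ideal_gen_def by (auto simp: monoid.m_closed[OF M])
    have "\<iota> y \<in> principal_right_ideal N (\<iota> a) \<inter> principal_right_ideal N (\<iota> b)"
      using y a b hom_right_ideal_gen[OF \<iota>, of "{a}"] hom_right_ideal_gen[OF \<iota>, of "{b}"] by simp
    then have "\<pi> (\<iota> y) \<in> right_ideal_gen M (\<pi> ` C)"
      using C hom_right_ideal_gen[OF \<pi>] by simp
    then show "y \<in> right_ideal_gen M (\<pi> ` C)"
      using retract[OF \<open>y \<in> carrier M\<close>] by simp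
  qed
  moreover have "\<pi> ` C \<subseteq> principal_right_ideal M a \<inter> principal_right_ideal M b"
  proof
    fix z assume "z \<in> \<pi> ` C"
    then obtain c where "c \<in> C" "z = \<pi> c"
      by blast
    then have "c \<in> principal_right_ideal N (\<iota> a) \<inter> principal_right_ideal N (\<iota> b)"
      using right_ideal_gen_incl[OF N C(2)] C(3) by blast
    then show "z \<in> principal_right_ideal M a \<inter> principal_right_ideal M b"
      using \<open>z = \<pi> c\<close> a b hom_in_carrier[OF \<iota>] retract
        hom_right_ideal_gen[OF \<pi>, of "{\<iota> a}"] hom_right_ideal_gen[OF \<pi>, of "{\<iota> b}"] by simp
  qed
  then have "right_ideal_gen M (\<pi> ` C) \<subseteq> principal_right_ideal M a \<inter> principal_right_ideal M b"
    using a b right_ideal_gen_subset[OF M, of "{a}"] right_ideal_gen_subset[OF M, of "{b}"] by simp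
  ultimately show "\<exists>C. finite C \<and> C \<subseteq> carrier M \<and>
      principal_right_ideal M a \<inter> principal_right_ideal M b = right_ideal_gen M C"
    using C(1) \<pi>C by blast
qed

lemma finitely_right_equated_retract:
  assumes M: "monoid M" and N: "monoid N" and \<pi>: "\<pi> \<in> hom N M" and \<iota>: "\<iota> \<in> hom M N"
    and retract: "\<And>x. x \<in> carrier M \<Longrightarrow> \<pi> (\<iota> x) = x"
    and fre: "finitely_right_equated N"
  shows "finitely_right_equated M"
  unfolding finitely_right_equated_def
proof
  fix a assume a: "a \<in> carrier M"
  show "fg_right_congruence M (carrier M) (right_mult M) (right_annihilator M a)"
  proof (rule fg_right_congruence_retract[OF right_mult_closed[OF N]
        finitely_right_equatedD[OF fre hom_in_carrier[OF \<iota> a]] right_annihilator_right_congruence[OF M a],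
        where \<psi> = \<iota>])
    show "\<pi> \<in> carrier N \<rightarrow> carrier M" "\<pi> \<in> carrier N \<rightarrow> carrier M"
      using hom_in_carrier[OF \<pi>] by blast+
    show "\<And>p u. p \<in> carrier N \<Longrightarrow> u \<in> carrier N \<Longrightarrow> \<pi> (p \<otimes>\<^bsub>N\<^esub> u) = \<pi> p \<otimes>\<^bsub>M\<^esub> \<pi> u"
      by (rule hom_mult[OF \<pi>])
  next
    fix p q assume "(p, q) \<in> right_annihilator N (\<iota> a)"
    then have "p \<in> carrier N" "q \<in> carrier N" "\<pi> (\<iota> a \<otimes>\<^bsub>N\<^esub> p) = \<pi> (\<iota> a \<otimes>\<^bsub>N\<^esub> q)"
      unfolding right_annihilator_def by auto
    then show "(\<pi> p, \<pi> q) \<in> right_annihilator M a"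
      using a hom_mult[OF \<pi>] hom_in_carrier[OF \<pi>] hom_in_carrier[OF \<iota>] retract
      unfolding right_annihilator_def by simp
  next
    fix s t assume "(s, t) \<in> right_annihilator M a"
    then have "s \<in> carrier M" "t \<in> carrier M" "\<iota> (a \<otimes>\<^bsub>M\<^esub> s) = \<iota> (a \<otimes>\<^bsub>M\<^esub> t)"
      unfolding right_annihilator_def by auto
    then show "(\<iota> s, \<iota> t) \<in> right_annihilator N (\<iota> a) \<and> \<pi> (\<iota> s) = s \<and> \<pi> (\<iota> t) = t"
      using a hom_mult[OF \<iota>] hom_in_carrier[OF \<iota>] retract unfolding right_annihilator_def by simp
  qed
qed

lemma right_ideal_gen_DirProd:
  "right_ideal_gen (S \<times>\<times> T) (C \<times> D) = right_ideal_gen S C \<times> right_ideal_gen T D"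
  unfolding right_ideal_gen_def by force

lemma principal_right_ideal_Howson_DirProd:
  assumes S: "principal_right_ideal_Howson S" and T: "principal_right_ideal_Howson T"
  shows "principal_right_ideal_Howson (S \<times>\<times> T)"
  unfolding principal_right_ideal_Howson_def
proof (clarsimp)
  fix a b c d assume "a \<in> carrier S" "b \<in> carrier T" "c \<in> carrier S" "d \<in> carrier T"
  then obtain C D where C: "finite C" "C \<subseteq> carrier S"
      "principal_right_ideal S a \<inter> principal_right_ideal S c = right_ideal_gen S C"
    and D: "finite D" "D \<subseteq> carrier T"
      "principal_right_ideal T b \<inter> principal_right_ideal T d = right_ideal_gen T D"
    using S T unfolding principal_right_ideal_Howson_def by meson
  have "principal_right_ideal (S \<times>\<times> T) (a, b) \<inter> principal_right_ideal (S \<times>\<times> T) (c, d) =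
      right_ideal_gen (S \<times>\<times> T) (C \<times> D)"
    using right_ideal_gen_DirProd[of S T "{a}" "{b}"] right_ideal_gen_DirProd[of S T "{c}" "{d}"]
    by (simp add: right_ideal_gen_DirProd Times_Int_Times C(3) D(3))
  moreover have "finite (C \<times> D)" "C \<times> D \<subseteq> carrier S \<times> carrier T"
    using C D by auto
  ultimately show "\<exists>E. finite E \<and> E \<subseteq> carrier S \<times> carrier T \<and>
      principal_right_ideal (S \<times>\<times> T) (a, b) \<inter> principal_right_ideal (S \<times>\<times> T) (c, d) =
      right_ideal_gen (S \<times>\<times> T) E"
    by blast
qed

lemma DirProd_retracts:
  assumes S: "monoid S" and T: "monoid T"
  shows "fst \<in> hom (S \<times>\<times> T) S" "(\<lambda>s. (s, \<one>\<^bsub>T\<^esub>)) \<in> hom S (S \<times>\<times> T)"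
    and "snd \<in> hom (S \<times>\<times> T) T" "(\<lambda>t. (\<one>\<^bsub>S\<^esub>, t)) \<in> hom T (S \<times>\<times> T)"
  using S T by (auto intro!: homI simp: monoid.one_closed monoid.m_closed)

text \<open>In \<open>S \<times> T\<close> this moves relations of \<open>S\<close> to an arbitrary second coordinate.\<close>
lemma gen_right_congruence_translate:
  assumes st: "(s, t) \<in> gen_right_congruence M (carrier M) (right_mult M) H"
    and N: "monoid N" and \<iota>: "\<iota> \<in> hom M N" and w: "w \<in> carrier N"
    and comm: "\<And>v. v \<in> carrier M \<Longrightarrow> \<iota> v \<otimes>\<^bsub>N\<^esub> w = w \<otimes>\<^bsub>N\<^esub> \<iota> v"
    and \<rho>: "right_congruence N (carrier N) (right_mult N) \<rho>"
    and H: "H \<subseteq> carrier M \<times> carrier M" "\<And>u u'. (u, u') \<in> H \<Longrightarrow> (\<iota> u, \<iota> u') \<in> \<rho>"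
    and closed: "\<forall>x\<in>carrier M. \<forall>s\<in>carrier M. x \<otimes>\<^bsub>M\<^esub> s \<in> carrier M"
  shows "(\<iota> s \<otimes>\<^bsub>N\<^esub> w, \<iota> t \<otimes>\<^bsub>N\<^esub> w) \<in> \<rho>"
  using st
proof (rule gen_right_congruence_map[OF _ closed \<rho>, where \<phi> = "\<lambda>u. \<iota> u \<otimes>\<^bsub>N\<^esub> w"])
  show "(\<lambda>u. \<iota> u \<otimes>\<^bsub>N\<^esub> w) \<in> carrier M \<rightarrow> carrier N" "\<iota> \<in> carrier M \<rightarrow> carrier N"
    using hom_in_carrier[OF \<iota>] w by (auto simp: monoid.m_closed[OF N])
  show "\<iota> (p \<otimes>\<^bsub>M\<^esub> u) \<otimes>\<^bsub>N\<^esub> w = \<iota> p \<otimes>\<^bsub>N\<^esub> w \<otimes>\<^bsub>N\<^esub> \<iota> u" if "p \<in> carrier M" "u \<in> carrier M" for p u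
  proof -
    have "\<iota> (p \<otimes>\<^bsub>M\<^esub> u) \<otimes>\<^bsub>N\<^esub> w = \<iota> p \<otimes>\<^bsub>N\<^esub> (\<iota> u \<otimes>\<^bsub>N\<^esub> w)"
      using that w hom_mult[OF \<iota>] hom_in_carrier[OF \<iota>] by (simp add: monoid.m_assoc[OF N])
    also have "\<dots> = \<iota> p \<otimes>\<^bsub>N\<^esub> (w \<otimes>\<^bsub>N\<^esub> \<iota> u)"
      by (simp only: comm[OF that(2)])
    also have "\<dots> = \<iota> p \<otimes>\<^bsub>N\<^esub> w \<otimes>\<^bsub>N\<^esub> \<iota> u"
      using that w hom_in_carrier[OF \<iota>] by (simp add: monoid.m_assoc[OF N])
    finally show ?thesis .
  qed
  show "(\<iota> u \<otimes>\<^bsub>N\<^esub> w, \<iota> u' \<otimes>\<^bsub>N\<^esub> w) \<in> \<rho>" if "(u, u') \<in> H" for u u'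
    using right_congruence_compat[OF \<rho> H(2)[OF that] w] .
qed (rule H(1))

text \<open>A pair of relations is reached in two steps, changing one coordinate at a time.\<close>
lemma gen_right_congruence_DirProd:
  assumes S: "monoid S" and T: "monoid T"
    and H1: "H1 \<subseteq> carrier S \<times> carrier S" and H2: "H2 \<subseteq> carrier T \<times> carrier T"
    and s: "(s, s') \<in> gen_right_congruence S (carrier S) (right_mult S) H1"
    and t: "(t, t') \<in> gen_right_congruence T (carrier T) (right_mult T) H2"
    and carrier: "s \<in> carrier S" "s' \<in> carrier S" "t \<in> carrier T" "t' \<in> carrier T"
  defines "H \<equiv> map_prod (\<lambda>s. (s, \<one>\<^bsub>T\<^esub>)) (\<lambda>s. (s, \<one>\<^bsub>T\<^esub>)) ` H1 \<union>
      map_prod (\<lambda>t. (\<one>\<^bsub>S\<^esub>, t)) (\<lambda>t. (\<one>\<^bsub>S\<^esub>, t)) ` H2"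
  shows "((s, t), (s', t')) \<in> gen_right_congruence (S \<times>\<times> T) (carrier (S \<times>\<times> T)) (right_mult (S \<times>\<times> T)) H"
proof -
  let ?P = "S \<times>\<times> T"
  let ?G = "gen_right_congruence ?P (carrier ?P) (right_mult ?P) H"
  have P: "monoid ?P"
    by (rule DirProd_monoid[OF S T])
  have G: "right_congruence ?P (carrier ?P) (right_mult ?P) ?G"
    using H1 H2 unfolding H_def
    by (intro right_congruence_gen_right_congruence right_mult_closed P) (auto simp: monoid.one_closed S T)
  have "((s, \<one>\<^bsub>T\<^esub>) \<otimes>\<^bsub>?P\<^esub> (\<one>\<^bsub>S\<^esub>, t), (s', \<one>\<^bsub>T\<^esub>) \<otimes>\<^bsub>?P\<^esub> (\<one>\<^bsub>S\<^esub>, t)) \<in> ?G"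
    using s
  proof (rule gen_right_congruence_translate[OF _ P DirProd_retracts(2)[OF S T] _ _ G H1 _
        right_mult_closed[OF S]])
    show "\<And>u u'. (u, u') \<in> H1 \<Longrightarrow> ((u, \<one>\<^bsub>T\<^esub>), (u', \<one>\<^bsub>T\<^esub>)) \<in> ?G"
      using gen_right_congruence_incl[of H] unfolding H_def by blast
  qed (use carrier S T in \<open>simp_all add: monoid.one_closed monoid.l_one monoid.r_one\<close>)
  moreover have "((\<one>\<^bsub>S\<^esub>, t) \<otimes>\<^bsub>?P\<^esub> (s', \<one>\<^bsub>T\<^esub>), (\<one>\<^bsub>S\<^esub>, t') \<otimes>\<^bsub>?P\<^esub> (s', \<one>\<^bsub>T\<^esub>)) \<in> ?G"
    using t
  proof (rule gen_right_congruence_translate[OF _ P DirProd_retracts(4)[OF S T] _ _ G H2 _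
        right_mult_closed[OF T]])
    show "\<And>u u'. (u, u') \<in> H2 \<Longrightarrow> ((\<one>\<^bsub>S\<^esub>, u), (\<one>\<^bsub>S\<^esub>, u')) \<in> ?G"
      using gen_right_congruence_incl[of H] unfolding H_def by blast
  qed (use carrier S T in \<open>simp_all add: monoid.one_closed monoid.l_one monoid.r_one\<close>)
  ultimately have "((s, t), (s', t)) \<in> ?G" "((s', t), (s', t')) \<in> ?G"
    using carrier by (simp_all add: monoid.l_one monoid.r_one S T)
  then show ?thesis
    by (rule right_congruence_trans[OF G])
qed

lemma finitely_right_equated_DirProd:
  assumes S: "monoid S" and T: "monoid T"
    and fre_S: "finitely_right_equated S" and fre_T: "finitely_right_equated T"
  shows "finitely_right_equated (S \<times>\<times> T)"
  unfolding finitely_right_equated_def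
proof
  let ?P = "S \<times>\<times> T"
  fix p assume "p \<in> carrier ?P"
  then obtain a b where p: "p = (a, b)" and a: "a \<in> carrier S" and b: "b \<in> carrier T"
    by auto
  obtain H1 where H1: "finite H1" "H1 \<subseteq> carrier S \<times> carrier S"
    "right_annihilator S a = gen_right_congruence S (carrier S) (right_mult S) H1"
    using finitely_right_equatedD[OF fre_S a] by (rule fg_right_congruenceE)
  obtain H2 where H2: "finite H2" "H2 \<subseteq> carrier T \<times> carrier T"
    "right_annihilator T b = gen_right_congruence T (carrier T) (right_mult T) H2"
    using finitely_right_equatedD[OF fre_T b] by (rule fg_right_congruenceE)
  define H where "H = map_prod (\<lambda>s. (s, \<one>\<^bsub>T\<^esub>)) (\<lambda>s. (s, \<one>\<^bsub>T\<^esub>)) ` H1 \<union>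
      map_prod (\<lambda>t. (\<one>\<^bsub>S\<^esub>, t)) (\<lambda>t. (\<one>\<^bsub>S\<^esub>, t)) ` H2"
  have ann_iff: "((s, t), (s', t')) \<in> right_annihilator ?P (a, b) \<longleftrightarrow>
      (s, s') \<in> right_annihilator S a \<and> (t, t') \<in> right_annihilator T b" for s t s' t'
    unfolding right_annihilator_def by auto
  have ann: "right_congruence ?P (carrier ?P) (right_mult ?P) (right_annihilator ?P (a, b))"
    using a b by (intro right_annihilator_right_congruence DirProd_monoid S T) simp
  have "H1 \<subseteq> right_annihilator S a" "H2 \<subseteq> right_annihilator T b"
    unfolding H1(3) H2(3) by (rule gen_right_congruence_incl)+
  moreover have "(\<one>\<^bsub>S\<^esub>, \<one>\<^bsub>S\<^esub>) \<in> right_annihilator S a" "(\<one>\<^bsub>T\<^esub>, \<one>\<^bsub>T\<^esub>) \<in> right_annihilator T b"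
    unfolding right_annihilator_def by (simp_all add: monoid.one_closed S T)
  ultimately have H_ann: "H \<subseteq> right_annihilator ?P (a, b)"
    unfolding H_def by (auto simp: ann_iff)
  have "right_annihilator ?P (a, b) \<subseteq> gen_right_congruence ?P (carrier ?P) (right_mult ?P) H"
  proof clarify
    fix s t s' t' assume "((s, t), (s', t')) \<in> right_annihilator ?P (a, b)"
    then have st: "(s, s') \<in> right_annihilator S a" "(t, t') \<in> right_annihilator T b"
      by (simp_all add: ann_iff)
    then have "s \<in> carrier S" "s' \<in> carrier S" "t \<in> carrier T" "t' \<in> carrier T"
      unfolding right_annihilator_def by auto
    with st show "((s, t), (s', t')) \<in> gen_right_congruence ?P (carrier ?P) (right_mult ?P) H"
      unfolding H1(3) H2(3) H_def by (intro gen_right_congruence_DirProd S T H1(2) H2(2))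
  qed
  moreover have "finite H"
    using H1(1) H2(1) unfolding H_def by simp
  ultimately show "fg_right_congruence ?P (carrier ?P) (right_mult ?P) (right_annihilator ?P p)"
    unfolding p using H_ann by (intro fg_right_congruenceI[OF ann])
qed

lemma principal_right_ideal_Howson_DirProd_iff:
  assumes S: "monoid S" and T: "monoid T"
  shows "principal_right_ideal_Howson (S \<times>\<times> T) \<longleftrightarrow>
    principal_right_ideal_Howson S \<and> principal_right_ideal_Howson T"
  using principal_right_ideal_Howson_DirProd
    principal_right_ideal_Howson_retract[OF S DirProd_monoid[OF S T] DirProd_retracts(1,2)[OF S T]]
    principal_right_ideal_Howson_retract[OF T DirProd_monoid[OF S T] DirProd_retracts(3,4)[OF S T]]
  by auto

lemma finitely_right_equated_DirProd_iff:
  assumes S: "monoid S" and T: "monoid T"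
  shows "finitely_right_equated (S \<times>\<times> T) \<longleftrightarrow> finitely_right_equated S \<and> finitely_right_equated T"
  using finitely_right_equated_DirProd[OF S T]
    finitely_right_equated_retract[OF S DirProd_monoid[OF S T] DirProd_retracts(1,2)[OF S T]]
    finitely_right_equated_retract[OF T DirProd_monoid[OF S T] DirProd_retracts(3,4)[OF S T]]
  by auto

theorem mainTheorem1:
  fixes S :: "'a monoid" and T :: "'b monoid"
  assumes "monoid S" and "monoid T"
  shows "weakly_right_coherent (S \<times>\<times> T) \<longleftrightarrow> weakly_right_coherent S \<and> weakly_right_coherent T"
  using weakly_right_coherent_iff[OF DirProd_monoid[OF assms]] weakly_right_coherent_iff[OF assms(1)]
    weakly_right_coherent_iff[OF assms(2)] principal_right_ideal_Howson_DirProd_iff[OF assms]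
    finitely_right_equated_DirProd_iff[OF assms]
  by blast

end
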